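(* Let $n\ge1$ be an integer, let $S_n$ be the sum of $n$ independent random variables each uniformly distributed on $[0,1]$, and let $p\ge 1$ be a real number. Then for every integer $k$, $$\Pr\Big(S_n\in \tfrac1p+[k-1,k]\Big)=\frac{1}{p^n\,n!}\,A^{(p)}(n,k).$$
   Context: For real $p\ge1$, integer $n\ge0$ and $0\le j\le n+1$, $A^{(p)}(n,j)=\sum_{r=0}^{j}(-1)^r\binom{n+1}{r}[p(j-r)+1]^{n}$; by convention $A^{(p)}(n,j)=0$ for $j<0$ and for $j>n+1$. Here $\tfrac1p+[k-1,k]$ denotes the interval $[\tfrac1p+k-1,\tfrac1p+k]$. *)

theory Defs
  imports "HOL-Probability.Probability"
begin

definition A :: "real \<Rightarrow> nat \<Rightarrow> int \<Rightarrow> real" where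
  "A p n j = (if j < 0 \<or> j > int n + 1 then 0
     else (\<Sum>r = 0..nat j. (-1) ^ r * real (Suc n choose r)
              * (p * real_of_int (j - int r) + 1) ^ n))"

end

theory Submission
  imports Defs
begin

text \<open>
  A sum S_n of n independent uniform variables on [0,1] has the Irwin--Hall distribution
  function F_n(x) = (1/n!) \<Sum>_{r\<le>n} (-1)^r C(n,r) (x-r)_+^n. This follows by induction
  on n: the law of S_{n+1} is the convolution of the uniform law with that of S_n, so
  F_{n+1}(x) = \<integral>_0^1 F_n(x-t) dt, and integrating (x-r-t)_+^n termwise and recombining
  with Pascal's rule gives F_{n+1}. The probability of [a-1,a] is F_n(a) - F_n(a-1), which
  by Pascal's rule once more is (1/n!) \<Sum>_{r\<le>n+1} (-1)^r C(n+1,r) (a-r)_+^n; for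
  a = 1/p + k only the terms with r \<le> k survive, and p(a-r) = p(k-r)+1. For k > n+1 both
  sides vanish, since S_n \<le> n almost surely.
\<close>

lemma has_integral_pos_part_power:
  fixes c :: real
  assumes "m \<ge> 1"
  shows "((\<lambda>t. (max (c - t) 0) ^ m) has_integral
           ((max c 0) ^ Suc m - (max (c - 1) 0) ^ Suc m) / real (Suc m)) {0..1}"
proof -
  define G where "G t = - ((max (c - t) 0) ^ Suc m) / real (Suc m)" for t :: real
  have "((\<lambda>t. (max (c - t) 0) ^ m) has_integral (G 1 - G 0)) {0..1}"
  proof (rule fundamental_theorem_of_calculus_interior_strong[where S = "{c}"])
    show "continuous_on {0..1} G"
      unfolding G_def by (intro continuous_intros) auto
    fix x assume x: "x \<in> {0<..<1} - {c}"
    show "(G has_vector_derivative (max (c - x) 0) ^ m) (at x)"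
      unfolding has_real_derivative_iff_has_vector_derivative[symmetric]
    proof (cases "x < c")
      case True
      have d: "((\<lambda>t. - ((c - t) ^ Suc m) / real (Suc m)) has_real_derivative (c - x) ^ m) (at x)"
        by (rule derivative_eq_intros refl)+
           (simp only: diff_Suc_1, simp add: of_nat_Suc[symmetric] del: of_nat_Suc)
      have "(G has_real_derivative (c - x) ^ m) (at x)"
        using True
        by (intro has_field_derivative_transform_within_open[OF d, where S = "{..<c}"]) (auto simp: G_def)
      then show "(G has_real_derivative (max (c - x) 0) ^ m) (at x)"
        using True by simp
    next
      case False
      with x have "x > c" by auto
      have "(G has_real_derivative 0) (at x)"
        using \<open>x > c\<close>
        by (intro has_field_derivative_transform_within_open[OF DERIV_const, where S = "{c<..}"])
           (auto simp: G_def)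
      then show "(G has_real_derivative (max (c - x) 0) ^ m) (at x)"
        using \<open>x > c\<close> assms by (simp add: power_0_left)
    qed
  qed auto
  then show ?thesis
    by (simp add: G_def diff_divide_distrib)
qed

text \<open>Summation by parts against Pascal's rule C(n+1,r+1) = C(n,r+1) + C(n,r).\<close>

lemma sum_alternating_choose_Suc:
  fixes f :: "nat \<Rightarrow> real"
  shows "(\<Sum>r\<le>Suc n. (-1) ^ r * real (Suc n choose r) * f r)
       = (\<Sum>r\<le>n. (-1) ^ r * real (n choose r) * (f r - f (Suc r)))"
proof -
  define T where "T r = (-1) ^ r * real (n choose r) * f r" for r
  have "(\<Sum>r\<le>Suc n. (-1) ^ r * real (Suc n choose r) * f r)
      = f 0 + (\<Sum>r\<le>n. T (Suc r) - (-1) ^ r * real (n choose r) * f (Suc r))"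
    by (subst sum.atMost_Suc_shift) (auto intro!: sum.cong simp: T_def algebra_simps)
  also have "\<dots> = (T 0 + (\<Sum>r\<le>n. T (Suc r))) - (\<Sum>r\<le>n. (-1) ^ r * real (n choose r) * f (Suc r))"
    by (simp add: sum_subtractf T_def)
  also have "T 0 + (\<Sum>r\<le>n. T (Suc r)) = (\<Sum>r\<le>Suc n. T r)"
    by (rule sum.atMost_Suc_shift[symmetric])
  also have "\<dots> = (\<Sum>r\<le>n. T r)"
    by (simp add: T_def)
  finally show ?thesis
    by (simp add: T_def sum_subtractf[symmetric] algebra_simps)
qed

definition irwin_hall_cdf :: "nat \<Rightarrow> real \<Rightarrow> real" where
  "irwin_hall_cdf n x = (\<Sum>r\<le>n. (-1) ^ r * real (n choose r) * (max (x - real r) 0) ^ n) / fact n"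

lemma irwin_hall_cdf_measurable [measurable]: "irwin_hall_cdf n \<in> borel_measurable borel"
  unfolding irwin_hall_cdf_def by measurable

lemma has_integral_irwin_hall_cdf_Suc:
  assumes "n \<ge> 1"
  shows "((\<lambda>t. irwin_hall_cdf n (x - t)) has_integral irwin_hall_cdf (Suc n) x) {0..1}"
proof -
  let ?g = "\<lambda>r. (max (x - real r) 0) ^ Suc n"
  have "((\<lambda>t. (\<Sum>r\<le>n. (-1) ^ r * real (n choose r) * (max ((x - real r) - t) 0) ^ n) / fact n)
     has_integral (\<Sum>r\<le>n. (-1) ^ r * real (n choose r) *
       (((max (x - real r) 0) ^ Suc n - (max ((x - real r) - 1) 0) ^ Suc n) / real (Suc n))) / fact n)
     {0..1}"
    by (intro has_integral_divide has_integral_sum has_integral_mult_right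
          has_integral_pos_part_power assms) auto
  also have "(\<Sum>r\<le>n. (-1) ^ r * real (n choose r) *
       (((max (x - real r) 0) ^ Suc n - (max ((x - real r) - 1) 0) ^ Suc n) / real (Suc n))) / fact n
      = (\<Sum>r\<le>n. (-1) ^ r * real (n choose r) * (?g r - ?g (Suc r))) / fact (Suc n)"
    by (simp add: sum_divide_distrib algebra_simps fact_Suc)
  also have "\<dots> = irwin_hall_cdf (Suc n) x"
    by (simp only: irwin_hall_cdf_def sum_alternating_choose_Suc)
  finally show ?thesis
    by (simp add: irwin_hall_cdf_def algebra_simps)
qed

lemma measure_uniform_01_atMost:
  "measure (uniform_measure lborel {0..1}) {..x} = irwin_hall_cdf 1 x"
proof -
  have "{0..1} \<inter> {..x} = (if x < 0 then {} else {0..min 1 x})"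
    by auto
  then show ?thesis
    by (auto simp: irwin_hall_cdf_def)
qed

lemma measure_uniform_01_lessThan:
  "measure (uniform_measure lborel {0..1}) {..<x} = irwin_hall_cdf 1 x"
proof -
  have "{0..1} \<inter> {..<x} = (if x \<le> 0 then {} else if x \<le> 1 then {0..<x} else {0..1})"
    by auto
  then show ?thesis
    by (auto simp: irwin_hall_cdf_def)
qed

text \<open>
  B y = y + B 0 is a family of translates: both {..y} and {..<y} are needed, since
  [a-1,a] = {..a} - {..<a-1}.
\<close>

lemma measure_convolution_uniform_irwin_hall:
  fixes N :: "real measure" and B :: "real \<Rightarrow> real set"
  assumes N: "prob_space N" "sets N = sets borel" and "m \<ge> 1"
    and cdf: "\<And>y. measure N (B y) = irwin_hall_cdf m y"
    and B_sets: "\<And>y. B y \<in> sets borel"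
    and B_translate: "\<And>y t. {a. a + t \<in> B y} = B (y - t)"
  shows "measure (uniform_measure lborel {0..1} \<star> N) (B x) = irwin_hall_cdf (Suc m) x"
proof -
  let ?U = "uniform_measure lborel {0..1::real}"
  interpret U: prob_space ?U
    by (rule prob_space_uniform_measure) auto
  interpret N: prob_space N by fact
  have cdf_nonneg: "irwin_hall_cdf m y \<ge> 0" for y
    using cdf measure_nonneg by metis
  have integral: "((\<lambda>t. irwin_hall_cdf m (x - t)) has_integral irwin_hall_cdf (Suc m) x) {0..1}"
    using has_integral_irwin_hall_cdf_Suc[OF \<open>m \<ge> 1\<close>] .
  have "emeasure (?U \<star> N) (B x) = \<integral>\<^sup>+t. emeasure N {a. a + t \<in> B x} \<partial>?U"
    using N(2) sets_eq_imp_space_eq[OF N(2)]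
    by (intro convolution_emeasure) (auto simp: B_sets U.finite_measure_axioms N.finite_measure_axioms)
  also have "\<dots> = \<integral>\<^sup>+t. ennreal (irwin_hall_cdf m (x - t)) \<partial>?U"
    by (simp add: B_translate N.emeasure_eq_measure cdf)
  also have "\<dots> = (\<integral>\<^sup>+t. ennreal (irwin_hall_cdf m (x - t)) * indicator {0..1} t \<partial>lborel)
                   / emeasure lborel {0..1::real}"
    by (rule nn_integral_uniform_measure) auto
  also have "\<dots> = ennreal (irwin_hall_cdf (Suc m) x)"
    using nn_integral_has_integral_lebesgue'[OF _ integral] cdf_nonneg
    by (simp add: divide_ennreal_def)
  finally show ?thesis
    using has_integral_nonneg[OF integral] cdf_nonneg by (simp add: measure_def)
qed

lemma distr_sum_lessThan_Suc:
  fixes X :: "nat \<Rightarrow> 'a \<Rightarrow> real"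
  assumes "prob_space M" and X_measurable: "\<And>i. i \<le> k \<Longrightarrow> X i \<in> borel_measurable M"
    and indep: "prob_space.indep_vars M (\<lambda>_. borel) X {..k}"
  shows "distr M lborel (\<lambda>\<omega>. \<Sum>i<Suc k. X i \<omega>)
       = (distr M lborel (X k) \<star> distr M lborel (\<lambda>\<omega>. \<Sum>i<k. X i \<omega>))"
proof -
  interpret prob_space M by fact
  have [measurable]: "X k \<in> borel_measurable M" "(\<lambda>\<omega>. \<Sum>i<k. X i \<omega>) \<in> borel_measurable M"
    using X_measurable by auto
  have "indep_var borel (X k) borel (\<lambda>\<omega>. \<Sum>i\<in>{..<k}. X i \<omega>)"
    using X_measurable by (intro indep_vars_sum indep_vars_subset[OF indep]) auto
  then have "distr M lborel (\<lambda>\<omega>. X k \<omega> + (\<Sum>i<k. X i \<omega>))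
           = (distr M lborel (X k) \<star> distr M lborel (\<lambda>\<omega>. \<Sum>i<k. X i \<omega>))"
    by (rule sum_indep_random_variable_lborel) auto
  then show ?thesis
    by (simp add: add.commute)
qed

lemma irwin_hall_cdf_sum_uniform:
  fixes X :: "nat \<Rightarrow> 'a \<Rightarrow> real"
  assumes "prob_space M" and "n \<ge> 1"
    and "\<And>i. i < n \<Longrightarrow> X i \<in> borel_measurable M"
    and "prob_space.indep_vars M (\<lambda>_. borel) X {..<n}"
    and "\<And>i. i < n \<Longrightarrow> distr M lborel (X i) = uniform_measure lborel {0..1}"
  shows "measure (distr M lborel (\<lambda>\<omega>. \<Sum>i<n. X i \<omega>)) {..x} = irwin_hall_cdf n x
       \<and> measure (distr M lborel (\<lambda>\<omega>. \<Sum>i<n. X i \<omega>)) {..<x} = irwin_hall_cdf n x"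
  using assms(2-5)
proof (induction n arbitrary: x rule: nat_induct_at_least)
  case base
  then show ?case
    using measure_uniform_01_atMost measure_uniform_01_lessThan by simp
next
  case (Suc n)
  interpret prob_space M by fact
  have indep: "indep_vars (\<lambda>_. borel) X {..<n}"
    using Suc.prems(2) by (rule indep_vars_subset) auto
  have [measurable]: "(\<lambda>\<omega>. \<Sum>i<n. X i \<omega>) \<in> borel_measurable M"
    using Suc.prems(1) by auto
  have "distr M lborel (\<lambda>\<omega>. \<Sum>i<Suc n. X i \<omega>)
      = (uniform_measure lborel {0..1} \<star> distr M lborel (\<lambda>\<omega>. \<Sum>i<n. X i \<omega>))"
    using distr_sum_lessThan_Suc[OF \<open>prob_space M\<close>, of n X] Suc.prems
    by (simp add: lessThan_Suc_atMost[symmetric])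
  moreover have "prob_space (distr M lborel (\<lambda>\<omega>. \<Sum>i<n. X i \<omega>))"
    by (rule prob_space_distr) simp
  ultimately show ?case
    using Suc.IH[OF _ indep] Suc.prems Suc.hyps
    by (auto intro!: measure_convolution_uniform_irwin_hall)
qed

lemma measure_sum_uniform_Icc:
  fixes X :: "nat \<Rightarrow> 'a \<Rightarrow> real"
  assumes "prob_space M" and "n \<ge> 1"
    and "\<And>i. i < n \<Longrightarrow> X i \<in> borel_measurable M"
    and "prob_space.indep_vars M (\<lambda>_. borel) X {..<n}"
    and "\<And>i. i < n \<Longrightarrow> distr M lborel (X i) = uniform_measure lborel {0..1}"
  shows "measure M {\<omega> \<in> space M. (\<Sum>i<n. X i \<omega>) \<in> {a - 1 .. a}}
       = irwin_hall_cdf n a - irwin_hall_cdf n (a - 1)"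
proof -
  interpret prob_space M by fact
  let ?D = "distr M lborel (\<lambda>\<omega>. \<Sum>i<n. X i \<omega>)"
  have [measurable]: "(\<lambda>\<omega>. \<Sum>i<n. X i \<omega>) \<in> borel_measurable M"
    using assms(3) by auto
  interpret D: prob_space ?D
    by (rule prob_space_distr) simp
  have "measure M {\<omega> \<in> space M. (\<Sum>i<n. X i \<omega>) \<in> {a - 1 .. a}} = measure ?D {a - 1 .. a}"
    by (subst measure_distr) (auto intro!: arg_cong[where f = "measure M"])
  also have "\<dots> = measure ?D ({..a} - {..<a - 1})"
    by (rule arg_cong[where f = "measure ?D"]) auto
  also have "\<dots> = measure ?D {..a} - measure ?D {..<a - 1}"
    by (rule D.finite_measure_Diff) auto
  also have "\<dots> = irwin_hall_cdf n a - irwin_hall_cdf n (a - 1)"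
    using irwin_hall_cdf_sum_uniform[OF assms] by simp
  finally show ?thesis .
qed

lemma measure_sum_uniform_above:
  fixes X :: "nat \<Rightarrow> 'a \<Rightarrow> real"
  assumes "prob_space M"
    and X_measurable: "\<And>i. i < n \<Longrightarrow> X i \<in> borel_measurable M"
    and uniform: "\<And>i. i < n \<Longrightarrow> distr M lborel (X i) = uniform_measure lborel {0..1}"
    and "B \<in> sets borel" and "B \<subseteq> {real n<..}"
  shows "measure M {\<omega> \<in> space M. (\<Sum>i<n. X i \<omega>) \<in> B} = 0"
proof -
  interpret prob_space M by fact
  have null: "measure M {\<omega> \<in> space M. 1 < X i \<omega>} = 0" if "i < n" for i
  proof -
    have "measure M {\<omega> \<in> space M. 1 < X i \<omega>} = measure (distr M lborel (X i)) {1<..}"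
      using X_measurable[OF that] by (subst measure_distr) (auto intro!: arg_cong[where f = "measure M"])
    also have "\<dots> = 0"
    proof -
      have "{0..1} \<inter> {1<..} = ({} :: real set)"
        by auto
      then show ?thesis
        using uniform[OF that] by simp
    qed
    finally show ?thesis .
  qed
  have "{\<omega> \<in> space M. (\<Sum>i<n. X i \<omega>) \<in> B} \<subseteq> (\<Union>i<n. {\<omega> \<in> space M. 1 < X i \<omega>})"
  proof clarify
    fix \<omega> assume \<omega>: "\<omega> \<in> space M" "(\<Sum>i<n. X i \<omega>) \<in> B"
    have "\<exists>i<n. 1 < X i \<omega>"
    proof (rule ccontr)
      assume "\<not> (\<exists>i<n. 1 < X i \<omega>)"
      then have "(\<Sum>i<n. X i \<omega>) \<le> (\<Sum>i<n. 1)"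
        by (intro sum_mono) (meson lessThan_iff not_less)
      with \<omega> \<open>B \<subseteq> {real n<..}\<close> show False
        by auto
    qed
    with \<omega> show "\<omega> \<in> (\<Union>i<n. {\<omega> \<in> space M. 1 < X i \<omega>})"
      by auto
  qed
  then have "measure M {\<omega> \<in> space M. (\<Sum>i<n. X i \<omega>) \<in> B}
           \<le> (\<Sum>i<n. measure M {\<omega> \<in> space M. 1 < X i \<omega>})"
    using X_measurable \<open>B \<in> sets borel\<close>
    by (intro order.trans[OF finite_measure_mono finite_measure_subadditive_finite]) auto
  then show ?thesis
    using null measure_nonneg[of M] by (simp add: order_antisym)
qed

lemma irwin_hall_cdf_diff:
  "irwin_hall_cdf n a - irwin_hall_cdf n (a - 1)
     = (\<Sum>r\<le>Suc n. (-1) ^ r * real (Suc n choose r) * (max (a - real r) 0) ^ n) / fact n"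
proof -
  have "irwin_hall_cdf n a - irwin_hall_cdf n (a - 1)
      = (\<Sum>r\<le>n. (-1) ^ r * real (n choose r)
           * ((max (a - real r) 0) ^ n - (max (a - real (Suc r)) 0) ^ n)) / fact n"
    unfolding irwin_hall_cdf_def
    by (simp add: diff_divide_distrib[symmetric] sum_subtractf[symmetric] algebra_simps)
  then show ?thesis
    by (simp only: sum_alternating_choose_Suc)
qed

lemma irwin_hall_cdf_diff_eq_A:
  fixes p :: real and k :: int
  assumes "n \<ge> 1" and "p \<ge> 1" and "k \<le> int n + 1"
  shows "irwin_hall_cdf n (1/p + k) - irwin_hall_cdf n (1/p + k - 1) = 1 / (p ^ n * fact n) * A p n k"
proof -
  define h where "h r = (-1) ^ r * real (Suc n choose r) * (max (1/p + k - real r) 0) ^ n" for r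
  have inv_p: "0 < 1/p" "1/p \<le> 1"
    using \<open>p \<ge> 1\<close> by auto
  have h_vanishes: "h r = 0" if "k < int r" for r
  proof -
    have "1/p + k - real r \<le> 0"
      using that inv_p by linarith
    then show ?thesis
      using \<open>n \<ge> 1\<close> by (simp add: h_def)
  qed
  have h_pos: "h r = (-1) ^ r * real (Suc n choose r) * (p * real_of_int (k - int r) + 1) ^ n / p ^ n"
    if "int r \<le> k" for r
  proof -
    have "1/p + k - real r > 0"
      using that inv_p by linarith
    moreover have "1/p + k - real r = (p * real_of_int (k - int r) + 1) / p"
      using \<open>p \<ge> 1\<close> by (simp add: field_simps)
    ultimately show ?thesis
      by (simp add: h_def power_divide)
  qed
  show ?thesis
  proof (cases "k < 0")
    case True
    then show ?thesis
      using irwin_hall_cdf_diff[of n "1/p + k"] h_vanishes by (simp add: A_def h_def[symmetric])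
  next
    case False
    have "(\<Sum>r\<le>Suc n. h r) = (\<Sum>r\<in>{0..nat k}. h r)"
      using False \<open>k \<le> int n + 1\<close> h_vanishes by (intro sum.mono_neutral_right) auto
    also have "\<dots> = (\<Sum>r\<in>{0..nat k}. (-1) ^ r * real (Suc n choose r)
                       * (p * real_of_int (k - int r) + 1) ^ n) / p ^ n"
      unfolding sum_divide_distrib using False by (intro sum.cong) (auto simp: h_pos)
    finally show ?thesis
      using irwin_hall_cdf_diff[of n "1/p + k"] False \<open>k \<le> int n + 1\<close>
      by (simp add: A_def h_def[symmetric])
  qed
qed

theorem corollary1:
  fixes M :: "'a measure" and X :: "nat \<Rightarrow> 'a \<Rightarrow> real"
    and n :: nat and p :: real and k :: int
  assumes "prob_space M"
    and "n \<ge> 1"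
    and "\<And>i. i < n \<Longrightarrow> X i \<in> borel_measurable M"
    and "prob_space.indep_vars M (\<lambda>_. borel) X {..<n}"
    and "\<And>i. i < n \<Longrightarrow> distr M lborel (X i) = uniform_measure lborel {0..1}"
    and "p \<ge> 1"
  shows "measure M {\<omega> \<in> space M. (\<Sum>i<n. X i \<omega>) \<in> {1/p + real_of_int k - 1 .. 1/p + real_of_int k}}
           = 1 / (p ^ n * fact n) * A p n k"
proof (cases "k \<le> int n + 1")
  case True
  then show ?thesis
    using measure_sum_uniform_Icc[OF assms(1-5)] irwin_hall_cdf_diff_eq_A[OF assms(2,6) True]
    by simp
next
  case False
  then have "real_of_int (int n + 2) \<le> real_of_int k"
    by simp
  moreover have "1/p > 0"
    using \<open>p \<ge> 1\<close> by simp
  ultimately have "real n < 1/p + real_of_int k - 1"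
    by linarith
  then have beyond: "{1/p + real_of_int k - 1 .. 1/p + real_of_int k} \<subseteq> {real n<..}"
    by auto
  show ?thesis
    using measure_sum_uniform_above[OF assms(1,3,5) _ beyond] False by (simp add: A_def)
qed

end
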